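(* Let $(X,\mathcal{O}(X))$ be a measurable space, $\mathcal{A}$ a unital $C^*$-algebra and $\mathcal{H}$ a Hilbert space. Let $\mathcal{I}:\mathcal{O}(X)\to CP(\mathcal{A},\mathcal{B}(\mathcal{H}))$ be a CP instrument with minimal bi-dilation $(\mathcal{K},\pi,E,V)$. Then a set $A\in\mathcal{O}(X)$ is an atom for $\mathcal{I}$ if and only if $A$ is an atom for the spectral instrument $\pi E$. In particular, $\mathcal{I}$ is atomic (resp. non-atomic) if and only if $\pi E$ is atomic (resp. non-atomic).
   Context: A CP instrument is a map $\mathcal{I}$ from $\mathcal{O}(X)$ to the completely positive maps $\mathcal{A}\to\mathcal{B}(\mathcal{H})$ such that for all $a\in\mathcal{A}$, $h,k\in\mathcal{H}$, $A\mapsto\langle h,\mathcal{I}(A)(a)k\rangle$ is a countably additive complex measure. A minimal bi-dilation is a quadruple $(\mathcal{K},\pi,E,V)$ with $\pi:\mathcal{A}\to\mathcal{B}(\mathcal{K})$ a unital $*$-homomorphism, $E:\mathcal{O}(X)\to\mathcal{B}(\mathcal{K})$ a spectral measure commuting with $\pi$, $V\in\mathcal{B}(\mathcal{H},\mathcal{K})$, with $\mathcal{I}(A)(a)=V^*\pi(a)E(A)V$ and $\overline{\mathrm{span}}\{\pi(a)E(A)Vh\}=\mathcal{K}$. $\pi E$ is the instrument $(\pi E)(A)(a)=\pi(a)E(A)$. For an instrument $\mathcal{J}$, a set $A\in\mathcal{O}(X)$ is an atom if $\mathcal{J}(A)\neq0$ and for every $B\subseteq A$ in $\mathcal{O}(X)$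 either $\mathcal{J}(B)=0$ or $\mathcal{J}(B)=\mathcal{J}(A)$. $\mathcal{J}$ is atomic if every $A$ with $\mathcal{J}(A)\neq0$ contains an atom, and non-atomic if it has no atom. *)

theory Defs
  imports "HOL-Analysis.Analysis"
begin

class cvec = ab_group_add +
  fixes cscale :: "complex \<Rightarrow> 'a \<Rightarrow> 'a" (infixr \<open>*\<^sub>C\<close> 75)
  assumes cscale_add_right: "c *\<^sub>C (x + y) = c *\<^sub>C x + c *\<^sub>C y"
    and cscale_add_left: "(b + c) *\<^sub>C x = b *\<^sub>C x + c *\<^sub>C x"
    and cscale_cscale: "b *\<^sub>C (c *\<^sub>C x) = (b * c) *\<^sub>C x"
    and cscale_one: "1 *\<^sub>C x = x"

class chilbert = cvec +
  fixes cinner :: "'a \<Rightarrow> 'a \<Rightarrow> complex"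
  assumes cinner_conj: "cinner x y = cnj (cinner y x)"
    and cinner_add_right: "cinner x (y + z) = cinner x y + cinner x z"
    and cinner_cscale_right: "cinner x (c *\<^sub>C y) = c * cinner x y"
    and cinner_nonneg: "0 \<le> Re (cinner x x)"
    and cinner_eq_zero: "cinner x x = 0 \<longleftrightarrow> x = 0"
    and chilbert_complete: "(\<forall>e>0. \<exists>N. \<forall>m\<ge>N. \<forall>n\<ge>N. sqrt (Re (cinner ((X::nat \<Rightarrow> 'a) m - X n) (X m - X n))) < e)
        \<Longrightarrow> (\<exists>L. \<forall>e>0. \<exists>N. \<forall>n\<ge>N. sqrt (Re (cinner (X n - L) (X n - L))) < e)"

class cstar_algebra = cvec + ring_1 +
  fixes cstar :: "'a \<Rightarrow> 'a"
    and anorm :: "'a \<Rightarrow> real"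
  assumes cscale_mult_left: "(c *\<^sub>C a) * b = c *\<^sub>C (a * b)"
    and cscale_mult_right: "a * (c *\<^sub>C b) = c *\<^sub>C (a * b)"
    and cstar_cstar: "cstar (cstar a) = a"
    and cstar_add: "cstar (a + b) = cstar a + cstar b"
    and cstar_cscale: "cstar (c *\<^sub>C a) = cnj c *\<^sub>C cstar a"
    and cstar_mult: "cstar (a * b) = cstar b * cstar a"
    and norm_nonneg_cstar: "0 \<le> anorm a"
    and norm_eq_zero_cstar: "anorm a = 0 \<longleftrightarrow> a = 0"
    and norm_triangle_cstar: "anorm (a + b) \<le> anorm a + anorm b"
    and norm_cscale_cstar: "anorm (c *\<^sub>C a) = cmod c * anorm a"
    and norm_mult_cstar: "anorm (a * b) \<le> anorm a * anorm b"
    and cstar_identity: "anorm (cstar a * a) = (anorm a)\<^sup>2"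
    and cstar_complete: "(\<forall>e>0. \<exists>N. \<forall>m\<ge>N. \<forall>n\<ge>N. anorm ((X::nat \<Rightarrow> 'a) m - X n) < e)
        \<Longrightarrow> (\<exists>L. \<forall>e>0. \<exists>N. \<forall>n\<ge>N. anorm (X n - L) < e)"

definition hnorm :: "'h::chilbert \<Rightarrow> real" where
  "hnorm x = sqrt (Re (cinner x x))"

definition clinear_map :: "('a::cvec \<Rightarrow> 'b::cvec) \<Rightarrow> bool" where
  "clinear_map T \<longleftrightarrow> (\<forall>x y. T (x + y) = T x + T y) \<and> (\<forall>c x. T (c *\<^sub>C x) = c *\<^sub>C T x)"

definition bounded_op :: "('h::chilbert \<Rightarrow> 'k::chilbert) \<Rightarrow> bool" where
  "bounded_op T \<longleftrightarrow> clinear_map T \<and> (\<exists>C. \<forall>x. hnorm (T x) \<le> C * hnorm x)"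

definition is_adjoint :: "('h::chilbert \<Rightarrow> 'k::chilbert) \<Rightarrow> ('k \<Rightarrow> 'h) \<Rightarrow> bool" where
  "is_adjoint T S \<longleftrightarrow> (\<forall>x y. cinner (S y) x = cinner y (T x))"

text \<open>Positive operator on \<open>H\<^sup>n\<close> given as an \<open>n\<times>n\<close> operator matrix \<open>T i j\<close>.\<close>
definition positive_opmatrix :: "nat \<Rightarrow> (nat \<Rightarrow> nat \<Rightarrow> 'h::chilbert \<Rightarrow> 'h) \<Rightarrow> bool" where
  "positive_opmatrix n T \<longleftrightarrow>
     (\<forall>h::nat \<Rightarrow> 'h. let s = (\<Sum>i<n. \<Sum>j<n. cinner (h i) (T i j (h j))) in Im s = 0 \<and> 0 \<le> Re s)"

definition positive_matrix :: "nat \<Rightarrow> (nat \<Rightarrow> nat \<Rightarrow> 'a::cstar_algebra) \<Rightarrow> bool" where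
  "positive_matrix n M \<longleftrightarrow>
     (\<exists>B::nat \<Rightarrow> nat \<Rightarrow> 'a. \<forall>i<n. \<forall>j<n. M i j = (\<Sum>k<n. cstar (B k i) * B k j))"

definition cp_map :: "('a::cstar_algebra \<Rightarrow> 'h::chilbert \<Rightarrow> 'h) \<Rightarrow> bool" where
  "cp_map \<phi> \<longleftrightarrow>
     (\<forall>a b. \<phi> (a + b) = (\<lambda>h. \<phi> a h + \<phi> b h)) \<and>
     (\<forall>c a. \<phi> (c *\<^sub>C a) = (\<lambda>h. c *\<^sub>C \<phi> a h)) \<and>
     (\<forall>a. bounded_op (\<phi> a)) \<and>
     (\<forall>n M. positive_matrix n M \<longrightarrow> positive_opmatrix n (\<lambda>i j. \<phi> (M i j)))"

definition countably_additive_cfun :: "'x measure \<Rightarrow> ('x set \<Rightarrow> complex) \<Rightarrow> bool" where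
  "countably_additive_cfun M \<mu> \<longleftrightarrow>
     (\<forall>F::nat \<Rightarrow> 'x set. range F \<subseteq> sets M \<longrightarrow> disjoint_family F \<longrightarrow>
        (\<lambda>n. \<mu> (F n)) sums \<mu> (\<Union>n. F n))"

definition cp_instrument ::
  "'x measure \<Rightarrow> ('x set \<Rightarrow> 'a::cstar_algebra \<Rightarrow> 'h::chilbert \<Rightarrow> 'h) \<Rightarrow> bool" where
  "cp_instrument M I \<longleftrightarrow>
     (\<forall>A\<in>sets M. cp_map (I A)) \<and>
     (\<forall>a h k. countably_additive_cfun M (\<lambda>A. cinner h (I A a k)))"

definition spectral_measure :: "'x measure \<Rightarrow> ('x set \<Rightarrow> 'k::chilbert \<Rightarrow> 'k) \<Rightarrow> bool" where
  "spectral_measure M E \<longleftrightarrow>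
     (\<forall>A\<in>sets M. bounded_op (E A) \<and> E A \<circ> E A = E A \<and> is_adjoint (E A) (E A)) \<and>
     E {} = (\<lambda>_. 0) \<and> E (space M) = id \<and>
     (\<forall>A\<in>sets M. \<forall>B\<in>sets M. E (A \<inter> B) = E A \<circ> E B) \<and>
     (\<forall>h k. countably_additive_cfun M (\<lambda>A. cinner h (E A k)))"

definition unital_star_hom :: "('a::cstar_algebra \<Rightarrow> 'k::chilbert \<Rightarrow> 'k) \<Rightarrow> bool" where
  "unital_star_hom \<pi> \<longleftrightarrow>
     (\<forall>a. bounded_op (\<pi> a)) \<and>
     (\<forall>a b. \<pi> (a + b) = (\<lambda>h. \<pi> a h + \<pi> b h)) \<and>
     (\<forall>c a. \<pi> (c *\<^sub>C a) = (\<lambda>h. c *\<^sub>C \<pi> a h)) \<and>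
     (\<forall>a b. \<pi> (a * b) = \<pi> a \<circ> \<pi> b) \<and>
     \<pi> 1 = id \<and>
     (\<forall>a. is_adjoint (\<pi> a) (\<pi> (cstar a)))"

definition cspan :: "'a::cvec set \<Rightarrow> 'a set" where
  "cspan S = {x. \<exists>F c. finite F \<and> F \<subseteq> S \<and> x = (\<Sum>v\<in>F. c v *\<^sub>C v)}"

definition dense_in_space :: "'k::chilbert set \<Rightarrow> bool" where
  "dense_in_space S \<longleftrightarrow> (\<forall>k. \<forall>e>0. \<exists>v\<in>S. hnorm (k - v) < e)"

definition spectral_instrument ::
  "('a \<Rightarrow> 'k \<Rightarrow> 'k) \<Rightarrow> ('x set \<Rightarrow> 'k \<Rightarrow> 'k) \<Rightarrow> 'x set \<Rightarrow> 'a \<Rightarrow> 'k \<Rightarrow> 'k" where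
  "spectral_instrument \<pi> E = (\<lambda>A a. \<pi> a \<circ> E A)"

text \<open>Minimal bi-dilation \<open>(K,\<pi>,E,V)\<close> of \<open>I\<close>; \<open>K\<close> is the type \<open>'k\<close>.\<close>
definition minimal_bidilation ::
  "'x measure \<Rightarrow> ('x set \<Rightarrow> 'a::cstar_algebra \<Rightarrow> 'h::chilbert \<Rightarrow> 'h) \<Rightarrow>
   ('a \<Rightarrow> 'k::chilbert \<Rightarrow> 'k) \<Rightarrow> ('x set \<Rightarrow> 'k \<Rightarrow> 'k) \<Rightarrow> ('h \<Rightarrow> 'k) \<Rightarrow> bool" where
  "minimal_bidilation M I \<pi> E V \<longleftrightarrow>
     unital_star_hom \<pi> \<and> spectral_measure M E \<and>
     (\<forall>a. \<forall>A\<in>sets M. \<pi> a \<circ> E A = E A \<circ> \<pi> a) \<and>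
     bounded_op V \<and>
     (\<exists>Vs. is_adjoint V Vs \<and> (\<forall>A\<in>sets M. \<forall>a. I A a = Vs \<circ> \<pi> a \<circ> E A \<circ> V)) \<and>
     dense_in_space (cspan {\<pi> a (E A (V h)) |a A h. A \<in> sets M})"

definition zero_map :: "'a \<Rightarrow> 'h::zero \<Rightarrow> 'h" where
  "zero_map = (\<lambda>_ _. 0)"

definition is_atom :: "'x measure \<Rightarrow> ('x set \<Rightarrow> 'a \<Rightarrow> 'h::zero \<Rightarrow> 'h) \<Rightarrow> 'x set \<Rightarrow> bool" where
  "is_atom M J A \<longleftrightarrow> A \<in> sets M \<and> J A \<noteq> zero_map \<and>
     (\<forall>B\<in>sets M. B \<subseteq> A \<longrightarrow> J B = zero_map \<or> J B = J A)"

definition atomic_instr :: "'x measure \<Rightarrow> ('x set \<Rightarrow> 'a \<Rightarrow> 'h::zero \<Rightarrow> 'h) \<Rightarrow> bool" where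
  "atomic_instr M J \<longleftrightarrow>
     (\<forall>A\<in>sets M. J A \<noteq> zero_map \<longrightarrow> (\<exists>B. B \<subseteq> A \<and> is_atom M J B))"

definition nonatomic_instr :: "'x measure \<Rightarrow> ('x set \<Rightarrow> 'a \<Rightarrow> 'h::zero \<Rightarrow> 'h) \<Rightarrow> bool" where
  "nonatomic_instr M J \<longleftrightarrow> \<not> (\<exists>A. is_atom M J A)"

end

theory Submission
  imports Defs
begin

(* Atoms of an instrument are determined by which sets carry the zero map and which
   subsets carry the same map as the ambient set. For both I and \<pi>E these relations are
   read off from the spectral measure E: for \<pi>E because \<pi> 1 = id, and for I because
   E B \<le> E A with V* E A V = V* E B V forces E A = E B. Indeed, E A - E B then kills the
   range of V and commutes with \<pi> and E, so by minimality it kills a dense subspace. *)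

lemma cinner_zero_right: "cinner x (0::'a::chilbert) = 0"
  using cinner_add_right[of x 0 0] by simp

lemma cinner_zero_left: "cinner (0::'a::chilbert) x = 0"
  using cinner_conj[of 0 x] by (simp add: cinner_zero_right)

lemma cinner_diff_right: "cinner x (y - z) = cinner x y - cinner x (z::'a::chilbert)"
  using cinner_add_right[of x "y - z" z] by simp

lemma cinner_add_left: "cinner (x + y) z = cinner x z + cinner y (z::'a::chilbert)"
  by (metis cinner_conj cinner_add_right complex_cnj_add)

lemma cinner_diff_left: "cinner (x - y) z = cinner x z - cinner y (z::'a::chilbert)"
  by (metis cinner_conj cinner_diff_right complex_cnj_diff)

lemma hnorm_nonneg: "0 \<le> hnorm x"
  unfolding hnorm_def using cinner_nonneg by simp

lemma hnorm_eq_zero: "hnorm (x::'a::chilbert) = 0 \<longleftrightarrow> x = 0"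
proof
  assume "hnorm x = 0"
  then have "Re (cinner x x) = 0"
    unfolding hnorm_def using cinner_nonneg[of x] by simp
  moreover have "Im (cinner x x) = 0"
    using cinner_conj[of x x] by (metis Reals_cnj_iff complex_is_Real_iff)
  ultimately show "x = 0"
    using cinner_eq_zero by (metis complex_eq_iff zero_complex.sel)
qed (simp add: hnorm_def cinner_zero_right)

lemma cscale_zero: "c *\<^sub>C (0::'a::cvec) = 0"
  using cscale_add_right[of c 0 0] by simp

lemma cscale_diff: "c *\<^sub>C ((x::'a::cvec) - y) = c *\<^sub>C x - c *\<^sub>C y"
  using cscale_add_right[of c "x - y" y] by (simp add: eq_diff_eq)

lemma clinear_map_zero: "clinear_map T \<Longrightarrow> T 0 = 0"
  unfolding clinear_map_def by (metis add.right_neutral add_left_cancel)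

lemma clinear_map_diff: "clinear_map T \<Longrightarrow> T (x - y) = T x - T y"
  unfolding clinear_map_def by (metis eq_diff_eq)

lemma clinear_map_sum:
  assumes "clinear_map T" "finite F"
  shows "T (\<Sum>v\<in>F. f v) = (\<Sum>v\<in>F. T (f v))"
  using assms(2) by induction (use assms(1) clinear_map_zero in \<open>auto simp: clinear_map_def\<close>)

lemma clinear_map_diff_fun:
  "clinear_map S \<Longrightarrow> clinear_map T \<Longrightarrow> clinear_map (\<lambda>x. S x - T x)"
  unfolding clinear_map_def by (simp add: cscale_diff algebra_simps)

lemma clinear_map_vanishes_on_cspan:
  assumes "clinear_map T" "\<And>v. v \<in> S \<Longrightarrow> T v = 0" "x \<in> cspan S"
  shows "T x = 0"
proof -
  obtain F c where F: "finite F" "F \<subseteq> S" "x = (\<Sum>v\<in>F. c v *\<^sub>C v)"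
    using assms(3) unfolding cspan_def by blast
  have "T x = (\<Sum>v\<in>F. T (c v *\<^sub>C v))"
    using F(3) clinear_map_sum[OF assms(1) F(1)] by simp
  also have "\<dots> = (\<Sum>v\<in>F. c v *\<^sub>C T v)"
    using assms(1) by (simp add: clinear_map_def)
  also have "\<dots> = 0"
    using F assms(2) by (simp add: subset_iff cscale_zero)
  finally show ?thesis .
qed

lemma bounded_op_vanishes_on_dense:
  assumes "bounded_op T" "dense_in_space S" "\<And>v. v \<in> S \<Longrightarrow> T v = 0"
  shows "T x = 0"
proof (rule ccontr)
  assume "T x \<noteq> 0"
  define n where "n = hnorm (T x)"
  have "n > 0"
    using \<open>T x \<noteq> 0\<close> hnorm_eq_zero hnorm_nonneg unfolding n_def by (metis less_eq_real_def)
  obtain C where C: "\<And>y. hnorm (T y) \<le> C * hnorm y"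
    using assms(1) unfolding bounded_op_def by blast
  define e where "e = n / (\<bar>C\<bar> + 1)"
  have "e > 0"
    using \<open>n > 0\<close> unfolding e_def by simp
  then obtain v where "v \<in> S" "hnorm (x - v) < e"
    using assms(2) unfolding dense_in_space_def by blast
  have "clinear_map T"
    using assms(1) unfolding bounded_op_def by blast
  then have "T (x - v) = T x"
    using clinear_map_diff[of T x v] assms(3)[OF \<open>v \<in> S\<close>] by simp
  then have "n \<le> C * hnorm (x - v)"
    using C unfolding n_def by metis
  also have "\<dots> \<le> \<bar>C\<bar> * hnorm (x - v)"
    using hnorm_nonneg[of "x - v"] by (metis abs_ge_self mult_right_mono)
  also have "\<dots> \<le> \<bar>C\<bar> * e"
    using \<open>hnorm (x - v) < e\<close> by (simp add: mult_left_mono)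
  also have "\<dots> < n"
    unfolding e_def using \<open>n > 0\<close> by (simp add: divide_simps)
  finally show False by simp
qed

lemma is_adjoint_cinner_right: "is_adjoint T S \<Longrightarrow> cinner x (S y) = cinner (T x) y"
  unfolding is_adjoint_def by (metis cinner_conj)

lemma is_adjoint_zero: "is_adjoint T S \<Longrightarrow> S 0 = 0"
  using cinner_eq_zero by (metis cinner_zero_left is_adjoint_def)

definition orth_projection :: "('k::chilbert \<Rightarrow> 'k) \<Rightarrow> bool" where
  "orth_projection P \<longleftrightarrow> bounded_op P \<and> P \<circ> P = P \<and> is_adjoint P P"

context
  fixes P Q :: "'k::chilbert \<Rightarrow> 'k"
  assumes P: "orth_projection P" and Q: "orth_projection Q"
    and PQ: "P \<circ> Q = Q" and QP: "Q \<circ> P = Q"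
begin

private lemma linear: "clinear_map P" "clinear_map Q"
  using P Q unfolding orth_projection_def bounded_op_def by blast+

private lemma Q_diff: "Q (P x - Q x) = 0"
  using Q comp_eq_dest_lhs[OF QP] comp_eq_dest_lhs[of Q Q Q]
  by (simp add: clinear_map_diff[OF linear(2)] orth_projection_def)

private lemma P_diff: "P (P x - Q x) = P x - Q x"
  using P comp_eq_dest_lhs[OF PQ] comp_eq_dest_lhs[of P P P]
  by (simp add: clinear_map_diff[OF linear(1)] orth_projection_def)

lemma orth_projection_diff_bounded: "bounded_op (\<lambda>x. P x - Q x)"
proof -
  have "hnorm (P x - Q x) \<le> hnorm (P x)" for x
  proof -
    have "cinner (P x - Q x) (Q x) = 0"
      using Q Q_diff cinner_zero_left unfolding orth_projection_def is_adjoint_def by metis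
    moreover have "cinner (Q x) (P x - Q x) = 0"
      using Q Q_diff cinner_zero_right unfolding orth_projection_def is_adjoint_def by metis
    ultimately have "cinner (P x) (P x) = cinner (P x - Q x) (P x - Q x) + cinner (Q x) (Q x)"
      using cinner_add_left cinner_add_right[of "P x - Q x" "P x - Q x" "Q x"]
        cinner_add_right[of "Q x" "P x - Q x" "Q x"] by (metis diff_add_cancel add_0 add_0_right)
    then show ?thesis
      unfolding hnorm_def using cinner_nonneg[of "Q x"] by simp
  qed
  moreover obtain C where "\<And>x. hnorm (P x) \<le> C * hnorm x"
    using P unfolding orth_projection_def bounded_op_def by blast
  moreover have "clinear_map (\<lambda>x. P x - Q x)"
    using linear by (rule clinear_map_diff_fun)
  ultimately show ?thesis
    unfolding bounded_op_def by (meson order_trans)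
qed

lemma orth_projection_eq_of_cinner_eq:
  assumes "cinner x (P x) = cinner x (Q x)"
  shows "P x = Q x"
proof -
  let ?d = "P x - Q x"
  have "cinner ?d ?d = cinner (P x) ?d - cinner (Q x) ?d"
    by (simp add: cinner_diff_left)
  also have "\<dots> = cinner x (P ?d) - cinner x (Q ?d)"
    using P Q unfolding orth_projection_def is_adjoint_def by simp
  also have "\<dots> = cinner x ?d"
    by (simp add: P_diff Q_diff cinner_zero_right)
  also have "\<dots> = 0"
    using assms by (simp add: cinner_diff_right)
  finally show ?thesis
    by (metis cinner_eq_zero eq_iff_diff_eq_0)
qed

end

lemma spectral_measure_orth_projection:
  "spectral_measure M E \<Longrightarrow> A \<in> sets M \<Longrightarrow> orth_projection (E A)"
  unfolding spectral_measure_def orth_projection_def by blast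

lemma spectral_measure_Int:
  "spectral_measure M E \<Longrightarrow> A \<in> sets M \<Longrightarrow> B \<in> sets M \<Longrightarrow> E A (E B x) = E (A \<inter> B) x"
  unfolding spectral_measure_def by simp

lemma spectral_measure_commute:
  "spectral_measure M E \<Longrightarrow> A \<in> sets M \<Longrightarrow> B \<in> sets M \<Longrightarrow> E A (E B x) = E B (E A x)"
  using spectral_measure_Int[of M E A B x] spectral_measure_Int[of M E B A x]
  by (simp add: Int_commute)

lemma minimal_bidilation_commutant_vanishing:
  assumes mb: "minimal_bidilation M I \<pi> E V" and "bounded_op D"
    and D_\<pi>: "\<And>a x. D (\<pi> a x) = \<pi> a (D x)"
    and D_E: "\<And>C x. C \<in> sets M \<Longrightarrow> D (E C x) = E C (D x)"
    and D_V: "\<And>h. D (V h) = 0"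
  shows "D x = 0"
proof -
  have \<pi>_zero: "\<pi> a 0 = 0" for a
    using mb clinear_map_zero
    unfolding minimal_bidilation_def unital_star_hom_def bounded_op_def by blast
  have E_zero: "C \<in> sets M \<Longrightarrow> E C 0 = 0" for C
    using mb clinear_map_zero
    unfolding minimal_bidilation_def spectral_measure_def bounded_op_def by blast
  have "clinear_map D"
    using \<open>bounded_op D\<close> unfolding bounded_op_def by blast
  moreover have "D v = 0" if "v \<in> {\<pi> a (E C (V h)) |a C h. C \<in> sets M}" for v
    using that by (auto simp: D_\<pi> D_E D_V E_zero \<pi>_zero)
  ultimately have "D v = 0" if "v \<in> cspan {\<pi> a (E C (V h)) |a C h. C \<in> sets M}" for v
    using that clinear_map_vanishes_on_cspan by blast
  then show ?thesis
    using mb bounded_op_vanishes_on_dense \<open>bounded_op D\<close>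
    unfolding minimal_bidilation_def by blast
qed

lemma minimal_bidilation_eq_of_compression_eq:
  assumes mb: "minimal_bidilation M I \<pi> E V"
    and A: "A \<in> sets M" and B: "B \<in> sets M" and "B \<subseteq> A"
    and compression: "\<And>h. cinner (V h) (E A (V h)) = cinner (V h) (E B (V h))"
  shows "E A = E B"
proof -
  have sm: "spectral_measure M E"
    and comm: "\<And>a C. C \<in> sets M \<Longrightarrow> \<pi> a \<circ> E C = E C \<circ> \<pi> a"
    and \<pi>_lin: "\<And>a. clinear_map (\<pi> a)"
    using mb unfolding minimal_bidilation_def unital_star_hom_def bounded_op_def by blast+
  have EA: "orth_projection (E A)" and EB: "orth_projection (E B)"
    using sm A B by (blast intro: spectral_measure_orth_projection)+
  have "E A \<circ> E B = E B" "E B \<circ> E A = E B"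
    using spectral_measure_Int[OF sm] A B \<open>B \<subseteq> A\<close> by (auto simp: Int_absorb1 Int_absorb2)
  note proj = EA EB this
  have "E A x - E B x = 0" for x
  proof (rule minimal_bidilation_commutant_vanishing[OF mb, where D = "\<lambda>x. E A x - E B x"])
    show "bounded_op (\<lambda>x. E A x - E B x)"
      using orth_projection_diff_bounded[OF proj] .
    show "E A (\<pi> a y) - E B (\<pi> a y) = \<pi> a (E A y - E B y)" for a y
      using fun_cong[OF comm[OF A], where x = y] fun_cong[OF comm[OF B], where x = y]
      by (simp add: clinear_map_diff[OF \<pi>_lin])
    show "E A (E C y) - E B (E C y) = E C (E A y - E B y)" if "C \<in> sets M" for C y
    proof -
      have "clinear_map (E C)"
        using spectral_measure_orth_projection[OF sm that]
        unfolding orth_projection_def bounded_op_def by blast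
      then show ?thesis
        using spectral_measure_commute[OF sm _ that] A B by (simp add: clinear_map_diff)
    qed
    show "E A (V h) - E B (V h) = 0" for h
      using orth_projection_eq_of_cinner_eq[OF proj compression] by simp
  qed
  then show ?thesis by auto
qed

context
  fixes M :: "'x measure"
    and J :: "'x set \<Rightarrow> 'a \<Rightarrow> 'h::zero \<Rightarrow> 'h"
    and J' :: "'x set \<Rightarrow> 'b \<Rightarrow> 'g::zero \<Rightarrow> 'g"
  assumes J_empty: "J {} = zero_map" and J'_empty: "J' {} = zero_map"
    and same_refinements:
      "\<And>A B. A \<in> sets M \<Longrightarrow> B \<in> sets M \<Longrightarrow> B \<subseteq> A \<Longrightarrow> J B = J A \<longleftrightarrow> J' B = J' A"
begin

private lemma same_null_sets: "A \<in> sets M \<Longrightarrow> J A = zero_map \<longleftrightarrow> J' A = zero_map"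
  using same_refinements[of A "{}"] J_empty J'_empty by auto

lemma is_atom_iff_of_same_refinements: "is_atom M J A \<longleftrightarrow> is_atom M J' A"
  by (auto simp: is_atom_def same_null_sets same_refinements)

lemma atomic_instr_iff_of_same_refinements: "atomic_instr M J \<longleftrightarrow> atomic_instr M J'"
  unfolding atomic_instr_def using same_null_sets is_atom_iff_of_same_refinements by simp

lemma nonatomic_instr_iff_of_same_refinements: "nonatomic_instr M J \<longleftrightarrow> nonatomic_instr M J'"
  unfolding nonatomic_instr_def using is_atom_iff_of_same_refinements by simp

end

lemma spectral_instrument_eq_iff:
  "unital_star_hom \<pi> \<Longrightarrow> spectral_instrument \<pi> E B = spectral_instrument \<pi> E A \<longleftrightarrow> E B = E A"
  unfolding spectral_instrument_def unital_star_hom_def by (metis id_comp)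

lemma spectral_instrument_empty:
  "unital_star_hom \<pi> \<Longrightarrow> spectral_measure M E \<Longrightarrow> spectral_instrument \<pi> E {} = zero_map"
  unfolding spectral_instrument_def unital_star_hom_def spectral_measure_def bounded_op_def zero_map_def
  by (auto simp: fun_eq_iff clinear_map_zero)

lemma minimal_bidilation_instrument_empty:
  assumes "minimal_bidilation M I \<pi> E V"
  shows "I {} = zero_map"
proof -
  obtain Vs where "is_adjoint V Vs" "\<And>a. I {} a = Vs \<circ> \<pi> a \<circ> E {} \<circ> V"
    using assms unfolding minimal_bidilation_def by blast
  with assms show ?thesis
    using spectral_instrument_empty[of \<pi> M E] is_adjoint_zero
    unfolding minimal_bidilation_def spectral_instrument_def zero_map_def
    by (auto simp: fun_eq_iff)
qed

lemma minimal_bidilation_instrument_eq_iff: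
  assumes mb: "minimal_bidilation M I \<pi> E V"
    and A: "A \<in> sets M" and B: "B \<in> sets M" and "B \<subseteq> A"
  shows "I B = I A \<longleftrightarrow> E B = E A"
proof -
  obtain Vs where adj: "is_adjoint V Vs"
    and I_eq: "\<And>C a. C \<in> sets M \<Longrightarrow> I C a = Vs \<circ> \<pi> a \<circ> E C \<circ> V"
    using mb unfolding minimal_bidilation_def by blast
  have \<pi>_one: "\<pi> 1 = id"
    using mb unfolding minimal_bidilation_def unital_star_hom_def by blast
  have compression: "cinner h (I C 1 h) = cinner (V h) (E C (V h))" if "C \<in> sets M" for C h
    using I_eq[OF that] \<pi>_one is_adjoint_cinner_right[OF adj] by simp
  show ?thesis
  proof
    assume "I B = I A"
    then show "E B = E A"
      using minimal_bidilation_eq_of_compression_eq[OF mb A B \<open>B \<subseteq> A\<close>]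
        compression[OF A] compression[OF B] by metis
  qed (simp add: fun_eq_iff I_eq A B)
qed

theorem proposition2p34:
  fixes M :: "'x measure"
    and I :: "'x set \<Rightarrow> 'a::cstar_algebra \<Rightarrow> 'h::chilbert \<Rightarrow> 'h"
    and \<pi> :: "'a \<Rightarrow> 'k::chilbert \<Rightarrow> 'k"
    and E :: "'x set \<Rightarrow> 'k \<Rightarrow> 'k"
    and V :: "'h \<Rightarrow> 'k"
  assumes "cp_instrument M I"
    and "minimal_bidilation M I \<pi> E V"
  shows "(\<forall>A. is_atom M I A \<longleftrightarrow> is_atom M (spectral_instrument \<pi> E) A)
    \<and> (atomic_instr M I \<longleftrightarrow> atomic_instr M (spectral_instrument \<pi> E))
    \<and> (nonatomic_instr M I \<longleftrightarrow> nonatomic_instr M (spectral_instrument \<pi> E))"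
proof -
  note mb = assms(2)
  have hom: "unital_star_hom \<pi>" and sm: "spectral_measure M E"
    using mb unfolding minimal_bidilation_def by blast+
  have "I B = I A \<longleftrightarrow> spectral_instrument \<pi> E B = spectral_instrument \<pi> E A"
    if "A \<in> sets M" "B \<in> sets M" "B \<subseteq> A" for A B
    using minimal_bidilation_instrument_eq_iff[OF mb that] spectral_instrument_eq_iff[OF hom]
    by blast
  note same = minimal_bidilation_instrument_empty[OF mb] spectral_instrument_empty[OF hom sm] this
  note transfer = is_atom_iff_of_same_refinements atomic_instr_iff_of_same_refinements
    nonatomic_instr_iff_of_same_refinements
  show ?thesis
    using transfer[where J = I and J' = "spectral_instrument \<pi> E", OF same] by blast
qed

end
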